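(* Let $(\mathbb S,+,\cdot)$ be an Essential S-Structure. Then $(\mathbb S_0,+,\cdot)$ (with the operations of $\mathbb S$ restricted to $\mathbb S_0$) forms a Commutative Ring with Unity $1$.
   Context: An S-Structure is a triple $(\mathbb S,+,\cdot)$ where $\mathbb S$ is a set and $+,\cdot$ are binary operations on $\mathbb S$ such that: $(\mathbb S,+)$ is a commutative group with identity $0$ (the inverse of $s$ is written $-s$, and $s-t:=s+(-t)$); $\mathbb S$ is closed under $\cdot$; and there exists $s\in\mathbb S$ with $0\cdot s\neq 0$ or $s\cdot 0\neq 0$. Multiplication binds tighter than addition. The structures considered come with a distinguished element of $\mathbb S$ denoted $1$. It is Commutative if $s\cdot t=t\cdot s$ for all $s,t$. For a Commutative S-Structure and $\alpha\in\mathbb S$, put $\mathbb S_\alpha=\{s\in\mathbb S:0\cdot s=s\cdot 0=\alpha\}$ and $\Lambda=\{\alpha\in\mathbb S:\mathbb S_\alpha\neq\emptyset\}$. Wheel Distributive: $s\cdot(t+r)+(s\cdot 0)=(s\cdot t)+(s\cdot r)$ for all $s,t,r\in\mathbb S$. S-Associative: for all $m,n\in\mathbb S_0$ and $s\in\mathbb S$, $m\cdot(n\cdot s)=(m\cdot n)\cdot s-([(m-1)\cdot(n-1)]\cdot(0\cdot s))$. Base: if $\mathbb S_0\neq\emptyset$ and $\alpha\in\Lambda$, $q\in\mathbb S_\alpha$ is a Base for $\mathbb S_\alpha$ if $q+\beta\in\mathbb S_\alpha$ for all $\beta\in\mathbb S_0$ and every $s\in\mathbb S_\alpha$ equals $q+\beta$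 for some $\beta\in\mathbb S_0$. Coordinated: $\mathbb S_0\neq\emptyset$ and every $\mathbb S_\alpha$ with $\alpha\in\Lambda$ has a Base. Standard Bases: a Coordinated Commutative S-Structure has Standard Bases if there is a specified element $q_0(1)\in\mathbb S_1$ which is a Base for $\mathbb S_1$, and for every $\alpha\in\Lambda$ the element $q_0(\alpha):=\alpha\cdot(q_0(1)+1)-1$ lies in $\mathbb S_\alpha$ and is a Base for $\mathbb S_\alpha$. An Essential S-Structure is an S-Structure that is Commutative, Wheel Distributive, S-Associative, has Standard Bases (in particular is Coordinated), satisfies $0,1\in\mathbb S_0$, and satisfies $\mathbb S_0=\{1\cdot x:x\in\mathbb S_0\}$. *)

theory Defs
  imports "HOL-Algebra.Ring"
begin

text \<open>An S-Structure is given by a carrier set S, addition pl, multiplication tm,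
  the additive identity z, and a distinguished element u.\<close>

definition add_group :: "'a set \<Rightarrow> ('a \<Rightarrow> 'a \<Rightarrow> 'a) \<Rightarrow> 'a \<Rightarrow> 'a monoid" where
  "add_group S pl z = \<lparr>carrier = S, mult = pl, one = z\<rparr>"

definition sneg :: "'a set \<Rightarrow> ('a \<Rightarrow> 'a \<Rightarrow> 'a) \<Rightarrow> 'a \<Rightarrow> 'a \<Rightarrow> 'a" where
  "sneg S pl z s = inv\<^bsub>add_group S pl z\<^esub> s"

definition ssub :: "'a set \<Rightarrow> ('a \<Rightarrow> 'a \<Rightarrow> 'a) \<Rightarrow> 'a \<Rightarrow> 'a \<Rightarrow> 'a \<Rightarrow> 'a" where
  "ssub S pl z s t = pl s (sneg S pl z t)"

definition S_Structure :: "'a set \<Rightarrow> ('a \<Rightarrow> 'a \<Rightarrow> 'a) \<Rightarrow> ('a \<Rightarrow> 'a \<Rightarrow> 'a) \<Rightarrow> 'a \<Rightarrow> 'a \<Rightarrow> bool" where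
  "S_Structure S pl tm z u \<longleftrightarrow>
     comm_group (add_group S pl z) \<and>
     (\<forall>s\<in>S. \<forall>t\<in>S. tm s t \<in> S) \<and>
     (\<exists>s\<in>S. tm z s \<noteq> z \<or> tm s z \<noteq> z) \<and>
     u \<in> S"

definition S_Commutative :: "'a set \<Rightarrow> ('a \<Rightarrow> 'a \<Rightarrow> 'a) \<Rightarrow> bool" where
  "S_Commutative S tm \<longleftrightarrow> (\<forall>s\<in>S. \<forall>t\<in>S. tm s t = tm t s)"

definition S_at :: "'a set \<Rightarrow> ('a \<Rightarrow> 'a \<Rightarrow> 'a) \<Rightarrow> 'a \<Rightarrow> 'a \<Rightarrow> 'a set" where
  "S_at S tm z \<alpha> = {s\<in>S. tm z s = \<alpha> \<and> tm s z = \<alpha>}"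

definition S_Lambda :: "'a set \<Rightarrow> ('a \<Rightarrow> 'a \<Rightarrow> 'a) \<Rightarrow> 'a \<Rightarrow> 'a set" where
  "S_Lambda S tm z = {\<alpha>\<in>S. S_at S tm z \<alpha> \<noteq> {}}"

definition Wheel_Distributive :: "'a set \<Rightarrow> ('a \<Rightarrow> 'a \<Rightarrow> 'a) \<Rightarrow> ('a \<Rightarrow> 'a \<Rightarrow> 'a) \<Rightarrow> 'a \<Rightarrow> bool" where
  "Wheel_Distributive S pl tm z \<longleftrightarrow>
     (\<forall>s\<in>S. \<forall>t\<in>S. \<forall>r\<in>S. pl (tm s (pl t r)) (tm s z) = pl (tm s t) (tm s r))"

definition S_Associative :: "'a set \<Rightarrow> ('a \<Rightarrow> 'a \<Rightarrow> 'a) \<Rightarrow> ('a \<Rightarrow> 'a \<Rightarrow> 'a) \<Rightarrow> 'a \<Rightarrow> 'a \<Rightarrow> bool" where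
  "S_Associative S pl tm z u \<longleftrightarrow>
     (\<forall>m\<in>S_at S tm z z. \<forall>n\<in>S_at S tm z z. \<forall>s\<in>S.
        tm m (tm n s) =
        ssub S pl z (tm (tm m n) s)
          (tm (tm (ssub S pl z m u) (ssub S pl z n u)) (tm z s)))"

definition Is_Base :: "'a set \<Rightarrow> ('a \<Rightarrow> 'a \<Rightarrow> 'a) \<Rightarrow> ('a \<Rightarrow> 'a \<Rightarrow> 'a) \<Rightarrow> 'a \<Rightarrow> 'a \<Rightarrow> 'a \<Rightarrow> bool" where
  "Is_Base S pl tm z \<alpha> q \<longleftrightarrow>
     q \<in> S_at S tm z \<alpha> \<and>
     (\<forall>\<beta>\<in>S_at S tm z z. pl q \<beta> \<in> S_at S tm z \<alpha>) \<and>
     (\<forall>s\<in>S_at S tm z \<alpha>. \<exists>\<beta>\<in>S_at S tm z z. s = pl q \<beta>)"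

definition Coordinated :: "'a set \<Rightarrow> ('a \<Rightarrow> 'a \<Rightarrow> 'a) \<Rightarrow> ('a \<Rightarrow> 'a \<Rightarrow> 'a) \<Rightarrow> 'a \<Rightarrow> bool" where
  "Coordinated S pl tm z \<longleftrightarrow>
     S_at S tm z z \<noteq> {} \<and>
     (\<forall>\<alpha>\<in>S_Lambda S tm z. \<exists>q. Is_Base S pl tm z \<alpha> q)"

definition Standard_Bases :: "'a set \<Rightarrow> ('a \<Rightarrow> 'a \<Rightarrow> 'a) \<Rightarrow> ('a \<Rightarrow> 'a \<Rightarrow> 'a) \<Rightarrow> 'a \<Rightarrow> 'a \<Rightarrow> bool" where
  "Standard_Bases S pl tm z u \<longleftrightarrow>
     Coordinated S pl tm z \<and> S_Commutative S tm \<and>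
     (\<exists>q1. Is_Base S pl tm z u q1 \<and>
        (\<forall>\<alpha>\<in>S_Lambda S tm z.
           ssub S pl z (tm \<alpha> (pl q1 u)) u \<in> S_at S tm z \<alpha> \<and>
           Is_Base S pl tm z \<alpha> (ssub S pl z (tm \<alpha> (pl q1 u)) u)))"

definition Essential_S_Structure :: "'a set \<Rightarrow> ('a \<Rightarrow> 'a \<Rightarrow> 'a) \<Rightarrow> ('a \<Rightarrow> 'a \<Rightarrow> 'a) \<Rightarrow> 'a \<Rightarrow> 'a \<Rightarrow> bool" where
  "Essential_S_Structure S pl tm z u \<longleftrightarrow>
     S_Structure S pl tm z u \<and>
     S_Commutative S tm \<and>
     Wheel_Distributive S pl tm z \<and>
     S_Associative S pl tm z u \<and>
     Standard_Bases S pl tm z u \<and>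
     z \<in> S_at S tm z z \<and> u \<in> S_at S tm z z \<and>
     S_at S tm z z = {tm u x | x. x \<in> S_at S tm z z}"

end

theory Submission
  imports Defs
begin

text \<open>On \<open>S\<^sub>0\<close> the correction term \<open>s\<cdot>0\<close> of wheel distributivity vanishes, so
  multiplication by elements of \<open>S\<^sub>0\<close> is additive.  The only real issue is closure of \<open>S\<^sub>0\<close>
  under multiplication: S-associativity with \<open>m = 0\<close> expresses \<open>0\<cdot>(a\<cdot>b)\<close> through
  \<open>0\<cdot>(a\<cdot>1)\<close> and \<open>0\<cdot>(1\<cdot>1)\<close>, and specialising \<open>a = 1\<close> forces both to vanish.  For \<open>m, n \<in> S\<^sub>0\<close>
  the correction term of S-associativity is then an element of \<open>S\<^sub>0\<close> times \<open>0\<cdot>s\<close>,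
  which vanishes for \<open>s \<in> S\<^sub>0\<close>.  Finally an element \<open>q \<in> S\<^sub>1\<close> gives \<open>1\<cdot>1 = 1\<close>, and
  \<open>S\<^sub>0 = 1\<cdot>S\<^sub>0\<close> makes \<open>1\<close> a unit.\<close>

locale comm_wheel_S_structure =
  fixes S :: "'a set" and pl tm :: "'a \<Rightarrow> 'a \<Rightarrow> 'a" and z u :: 'a
  assumes add_comm_group: "comm_group (add_group S pl z)"
    and tm_closed: "\<And>s t. s \<in> S \<Longrightarrow> t \<in> S \<Longrightarrow> tm s t \<in> S"
    and tm_commutative: "S_Commutative S tm"
    and wheel_distributive: "Wheel_Distributive S pl tm z"
    and S_associative: "S_Associative S pl tm z u"
    and zero_in_S0: "z \<in> S_at S tm z z"
    and unit_in_S0: "u \<in> S_at S tm z z"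
begin

abbreviation S0 :: "'a set" where "S0 \<equiv> S_at S tm z z"
abbreviation neg :: "'a \<Rightarrow> 'a" where "neg \<equiv> sneg S pl z"

interpretation add: comm_group "add_group S pl z"
  by (rule add_comm_group)

lemma add_group_simps [simp]:
  "carrier (add_group S pl z) = S" "mult (add_group S pl z) = pl" "one (add_group S pl z) = z"
  by (simp_all add: add_group_def)

lemma pl_closed [simp]: "x \<in> S \<Longrightarrow> y \<in> S \<Longrightarrow> pl x y \<in> S"
  using add.m_closed by simp

lemma zero_closed [simp]: "z \<in> S"
  using add.one_closed by simp

lemma neg_closed [simp]: "x \<in> S \<Longrightarrow> neg x \<in> S"
  using add.inv_closed by (simp add: sneg_def)

lemma pl_assoc: "x \<in> S \<Longrightarrow> y \<in> S \<Longrightarrow> w \<in> S \<Longrightarrow> pl (pl x y) w = pl x (pl y w)"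
  using add.m_assoc by simp

lemma pl_commute: "x \<in> S \<Longrightarrow> y \<in> S \<Longrightarrow> pl x y = pl y x"
  using add.m_comm by simp

lemma pl_zero_left [simp]: "x \<in> S \<Longrightarrow> pl z x = x"
  using add.l_one by simp

lemma pl_zero_right [simp]: "x \<in> S \<Longrightarrow> pl x z = x"
  using add.r_one by simp

lemma pl_neg_right [simp]: "x \<in> S \<Longrightarrow> pl x (neg x) = z"
  using add.r_inv by (simp add: sneg_def)

lemma pl_neg_left [simp]: "x \<in> S \<Longrightarrow> pl (neg x) x = z"
  using add.l_inv by (simp add: sneg_def)

lemma neg_unique: "x \<in> S \<Longrightarrow> y \<in> S \<Longrightarrow> pl x y = z \<Longrightarrow> neg x = y"
  using add.inv_equality[of y x] by (simp add: sneg_def pl_commute)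

lemma neg_pl: "x \<in> S \<Longrightarrow> y \<in> S \<Longrightarrow> neg (pl x y) = pl (neg x) (neg y)"
  using add.inv_mult by (simp add: sneg_def)

lemma neg_neg [simp]: "x \<in> S \<Longrightarrow> neg (neg x) = x"
  by (rule neg_unique) simp_all

lemma neg_zero [simp]: "neg z = z"
  by (rule neg_unique) simp_all

lemma ssub_eq [simp]: "ssub S pl z a b = pl a (neg b)"
  by (simp add: ssub_def)

declare tm_closed [simp]

lemma tm_commute: "s \<in> S \<Longrightarrow> t \<in> S \<Longrightarrow> tm s t = tm t s"
  using tm_commutative by (simp add: S_Commutative_def)

lemma S0_iff: "a \<in> S0 \<longleftrightarrow> a \<in> S \<and> tm z a = z"
  unfolding S_at_def using tm_commute zero_closed by auto

lemma S0_subset: "a \<in> S0 \<Longrightarrow> a \<in> S"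
  by (simp add: S0_iff)

lemma zero_tm_S0: "a \<in> S0 \<Longrightarrow> tm z a = z"
  by (simp add: S0_iff)

lemma S0_tm_zero: "a \<in> S0 \<Longrightarrow> tm a z = z"
  by (simp add: S_at_def)

lemma unit_closed [simp]: "u \<in> S"
  using unit_in_S0 by (rule S0_subset)

lemma S0_tm_pl:
  assumes a: "a \<in> S0" and "t \<in> S" "r \<in> S"
  shows "tm a (pl t r) = pl (tm a t) (tm a r)"
proof -
  have "a \<in> S" using a by (rule S0_subset)
  moreover have "pl (tm a (pl t r)) (tm a z) = pl (tm a t) (tm a r)"
    using wheel_distributive \<open>a \<in> S\<close> assms(2,3) unfolding Wheel_Distributive_def by blast
  ultimately show ?thesis using S0_tm_zero[OF a] assms(2,3) by simp
qed

lemma S0_tm_neg: "a \<in> S0 \<Longrightarrow> t \<in> S \<Longrightarrow> tm a (neg t) = neg (tm a t)"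
  using S0_tm_pl[of a t "neg t"] S0_tm_zero[of a] S0_subset[of a]
  by (intro neg_unique[symmetric]) simp_all

lemma S0_pl_closed: "a \<in> S0 \<Longrightarrow> b \<in> S0 \<Longrightarrow> pl a b \<in> S0"
  using S0_tm_pl[OF zero_in_S0] by (simp add: S0_iff)

lemma S0_neg_closed: "a \<in> S0 \<Longrightarrow> neg a \<in> S0"
  using S0_tm_neg[OF zero_in_S0] by (simp add: S0_iff)

lemma S_assoc:
  "m \<in> S0 \<Longrightarrow> k \<in> S0 \<Longrightarrow> s \<in> S \<Longrightarrow>
    tm m (tm k s) = pl (tm (tm m k) s) (neg (tm (tm (pl m (neg u)) (pl k (neg u))) (tm z s)))"
  using S_associative by (simp add: S_Associative_def)

lemma zero_tm_tm:
  assumes a: "a \<in> S0" and b: "b \<in> S0"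
  shows "tm z (tm a b) = pl (tm z (tm a u)) (neg (tm z (tm u u)))"
proof -
  have aS: "a \<in> S" using a by (rule S0_subset)
  have neg_u: "neg u \<in> S0" using unit_in_S0 by (rule S0_neg_closed)
  define Y where "Y = tm (neg u) (pl a (neg u))"
  have "tm z (tm a b) = neg (tm Y z)"
    using S_assoc[OF zero_in_S0 a S0_subset[OF b]] zero_tm_S0[OF a] zero_tm_S0[OF b] aS
    by (simp add: Y_def)
  moreover have "Y = pl (neg (tm a u)) (tm u u)"
    using S0_tm_pl[OF neg_u] S0_tm_neg[OF neg_u] S0_tm_neg[OF a] S0_tm_neg[OF unit_in_S0]
      tm_commute[of "neg u"] aS
    by (simp add: Y_def)
  ultimately show ?thesis
    using tm_commute[of _ z] S0_tm_pl[OF zero_in_S0] S0_tm_neg[OF zero_in_S0] aS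
    by (simp add: neg_pl)
qed

lemma zero_tm_unit_tm: "b \<in> S0 \<Longrightarrow> tm z (tm u b) = z"
  using zero_tm_tm[OF unit_in_S0] by simp

lemma S0_tm_closed:
  assumes a: "a \<in> S0" and b: "b \<in> S0"
  shows "tm a b \<in> S0"
proof -
  have "tm z (tm a u) = z"
    using zero_tm_unit_tm[OF a] tm_commute[of a u] S0_subset[OF a] by simp
  then have "tm z (tm a b) = z"
    using zero_tm_tm[OF a b] zero_tm_unit_tm[OF unit_in_S0] by simp
  then show ?thesis
    using S0_subset[OF a] S0_subset[OF b] by (simp add: S0_iff)
qed

lemma S0_tm_assoc:
  assumes a: "a \<in> S0" and b: "b \<in> S0" and c: "c \<in> S0"
  shows "tm (tm a b) c = tm a (tm b c)"
proof -
  have "tm (pl a (neg u)) (pl b (neg u)) \<in> S0"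
    using a b unit_in_S0 by (intro S0_tm_closed S0_pl_closed S0_neg_closed)
  then show ?thesis
    using S_assoc[OF a b S0_subset[OF c]] zero_tm_S0[OF c] S0_tm_zero
      S0_subset[OF a] S0_subset[OF b] S0_subset[OF c]
    by simp
qed

text \<open>Here \<open>m = 1, n = 0\<close> and \<open>s = q\<close> with \<open>0\<cdot>q = 1\<close>; the correction term is \<open>0\<cdot>(0\<cdot>q) = 0\<cdot>1 = 0\<close>.\<close>
lemma unit_tm_unit:
  assumes "S_at S tm z u \<noteq> {}"
  shows "tm u u = u"
proof -
  obtain q where q: "q \<in> S" and zq: "tm z q = u"
    using assms unfolding S_at_def by blast
  have "tm u (tm z q) = pl (tm (tm u z) q) (neg (tm z (tm z q)))"
    using S_assoc[OF unit_in_S0 zero_in_S0 q] zero_tm_S0[OF S0_neg_closed[OF unit_in_S0]]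
      S0_subset[OF S0_neg_closed[OF unit_in_S0]]
    by simp
  then show ?thesis
    using zq S0_tm_zero[OF unit_in_S0] zero_tm_S0[OF unit_in_S0] by simp
qed

abbreviation S0_ring :: "'a ring" where
  "S0_ring \<equiv> \<lparr>carrier = S0, mult = tm, one = u, zero = z, add = pl\<rparr>"

lemma cring_S0_ring:
  assumes S1_nonempty: "S_at S tm z u \<noteq> {}"
    and S0_eq: "S0 = {tm u x | x. x \<in> S0}"
  shows "cring S0_ring"
proof -
  have unit_tm: "tm u x = x" if x: "x \<in> S0" for x
  proof -
    obtain y where y: "y \<in> S0" "x = tm u y"
      using x S0_eq by blast
    then show ?thesis
      using S0_tm_assoc[OF unit_in_S0 unit_in_S0 y(1)] unit_tm_unit[OF S1_nonempty] by simp
  qed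
  show ?thesis
  proof (rule cringI)
    show "abelian_group S0_ring"
    proof (rule abelian_groupI; simp)
      show "\<exists>y\<in>S0. pl y x = z" if "x \<in> S0" for x
        using S0_neg_closed[OF that] S0_subset[OF that] by force
    qed (auto simp: S0_pl_closed zero_in_S0 S0_subset pl_assoc intro: pl_commute)
    show "comm_monoid S0_ring"
      by (rule comm_monoidI; simp)
        (auto simp: S0_tm_closed unit_in_S0 S0_tm_assoc unit_tm S0_subset intro: tm_commute)
    fix x y w
    assume "x \<in> carrier S0_ring" "y \<in> carrier S0_ring" "w \<in> carrier S0_ring"
    then have x: "x \<in> S0" and y: "y \<in> S0" and w: "w \<in> S0" by simp_all
    have "tm (pl x y) w = pl (tm x w) (tm y w)"
      using S0_tm_pl[OF w] tm_commute S0_subset x y w by simp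
    then show "(x \<oplus>\<^bsub>S0_ring\<^esub> y) \<otimes>\<^bsub>S0_ring\<^esub> w =
        x \<otimes>\<^bsub>S0_ring\<^esub> w \<oplus>\<^bsub>S0_ring\<^esub> y \<otimes>\<^bsub>S0_ring\<^esub> w"
      by simp
  qed
qed

end

theorem theorem3p1p1:
  fixes S :: "'a set" and pl tm :: "'a \<Rightarrow> 'a \<Rightarrow> 'a" and z u :: 'a
  assumes "Essential_S_Structure S pl tm z u"
  shows "cring \<lparr>carrier = S_at S tm z z, mult = tm, one = u, zero = z, add = pl\<rparr>"
proof -
  interpret comm_wheel_S_structure S pl tm z u
    using assms unfolding comm_wheel_S_structure_def Essential_S_Structure_def S_Structure_def
    by blast
  have "S_at S tm z u \<noteq> {}"
    using assms by (auto simp: Essential_S_Structure_def Standard_Bases_def Is_Base_def)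
  moreover have "S0 = {tm u x | x. x \<in> S0}"
    using assms by (simp add: Essential_S_Structure_def)
  ultimately show ?thesis
    by (rule cring_S0_ring)
qed

end
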